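(* For any nonzero circulant matrix $A\in\mathbb{R}_+^{n\times n}$, the sequence $\{(A/\lambda(A))^t\}_{t\ge1}$ of max-algebraic powers is ultimately periodic, and its transient satisfies $T(A)\le (n-1)^2+1$.
   Context: Max algebra on $\mathbb{R}_+$ with $\oplus=\max$ and ordinary product; $A^t$ is the max-algebraic power. A circulant matrix $\mathrm{Circ}(a_0,\dots,a_{n-1})$ has $A_{i,j}=a_t$ with $t\equiv j-i\pmod n$, $t\in\{0,\dots,n-1\}$. $\lambda(A)$ is the greatest max-algebraic eigenvalue (maximum cycle geometric mean). A sequence $\{\alpha_t\}$ is ultimately periodic if there are $T,\sigma$ with $\alpha_{t+\sigma}=\alpha_t$ for all $t\ge T$; the least such $T$ is the transient, denoted $T(A)$ for the sequence $\{(A/\lambda(A))^t\}$. *)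

theory Defs
  imports Complex_Main
begin

text \<open>n x n matrices over R_+ are represented as functions nat => nat => real;
  only the entries with indices < n are meaningful.\<close>

definition circ :: "nat \<Rightarrow> (nat \<Rightarrow> real) \<Rightarrow> nat \<Rightarrow> nat \<Rightarrow> real" where
  "circ n a i j = a ((j + n - i) mod n)"

definition mp_mult :: "nat \<Rightarrow> (nat \<Rightarrow> nat \<Rightarrow> real) \<Rightarrow> (nat \<Rightarrow> nat \<Rightarrow> real) \<Rightarrow> nat \<Rightarrow> nat \<Rightarrow> real" where
  "mp_mult n A B i j = Max ((\<lambda>k. A i k * B k j) ` {..<n})"

fun mp_pow :: "nat \<Rightarrow> (nat \<Rightarrow> nat \<Rightarrow> real) \<Rightarrow> nat \<Rightarrow> nat \<Rightarrow> nat \<Rightarrow> real" where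
  "mp_pow n A 0 = (\<lambda>i j. if i = j then 1 else 0)"
| "mp_pow n A (Suc t) = mp_mult n (mp_pow n A t) A"

definition cycle_gmean :: "(nat \<Rightarrow> nat \<Rightarrow> real) \<Rightarrow> nat list \<Rightarrow> real" where
  "cycle_gmean A xs = root (length xs)
     (\<Prod>i<length xs. A (xs ! i) (xs ! ((i + 1) mod length xs)))"

definition mp_lambda :: "nat \<Rightarrow> (nat \<Rightarrow> nat \<Rightarrow> real) \<Rightarrow> real" where
  "mp_lambda n A = Max (cycle_gmean A ` {xs. xs \<noteq> [] \<and> distinct xs \<and> set xs \<subseteq> {..<n}})"

definition mat_scale :: "real \<Rightarrow> (nat \<Rightarrow> nat \<Rightarrow> real) \<Rightarrow> nat \<Rightarrow> nat \<Rightarrow> real" where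
  "mat_scale c A i j = c * A i j"

definition normpow :: "nat \<Rightarrow> (nat \<Rightarrow> nat \<Rightarrow> real) \<Rightarrow> nat \<Rightarrow> nat \<Rightarrow> nat \<Rightarrow> real" where
  "normpow n A t = mp_pow n (mat_scale (1 / mp_lambda n A) A) t"

definition periodic_from :: "nat \<Rightarrow> (nat \<Rightarrow> nat \<Rightarrow> real) \<Rightarrow> nat \<Rightarrow> bool" where
  "periodic_from n A T \<longleftrightarrow> T \<ge> 1 \<and> (\<exists>\<sigma>>0. \<forall>t\<ge>T. \<forall>i<n. \<forall>j<n.
      normpow n A (t + \<sigma>) i j = normpow n A t i j)"

definition ult_periodic :: "nat \<Rightarrow> (nat \<Rightarrow> nat \<Rightarrow> real) \<Rightarrow> bool" where
  "ult_periodic n A \<longleftrightarrow> (\<exists>T. periodic_from n A T)"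

definition transient :: "nat \<Rightarrow> (nat \<Rightarrow> nat \<Rightarrow> real) \<Rightarrow> nat" where
  "transient n A = (LEAST T. periodic_from n A T)"

end

theory Submission
  imports Defs
begin

text \<open>Scale so that the largest coefficient \<open>a s\<close> becomes 1. Every cycle mean is then at most 1,
  and the orbit of 0 under \<open>x \<mapsto> x + s mod n\<close> is a cycle of mean 1, so \<open>\<lambda>(A) = a s\<close>.
  Entry \<open>(i, j)\<close> of the \<open>k\<close>-th power of \<open>Circ(c)\<close> is the largest weight \<open>c w\<^sub>1 \<cdots> c w\<^sub>k\<close> of
  a word \<open>w\<close> of length \<open>k\<close> over \<open>{0..n-1}\<close> whose letter sum is \<open>j - i\<close> modulo \<open>n\<close>.
  By pigeonhole on the partial sums of the letters shifted by \<open>-s\<close>, every word of length \<open>\<ge> n\<close>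
  contains a factor whose letter sum is congruent to \<open>s\<close> times its length; deleting it
  does not decrease the weight, and the lost length is made up by letters \<open>s\<close> of weight 1.
  Hence the powers \<open>k\<close> and \<open>k + n\<close> agree for \<open>k \<ge> n - 1\<close>, so the transient is at most
  \<open>max 1 (n - 1)\<close>.\<close>

lemma circ_offset_shift:
  assumes "x < (n::nat)"
  shows "((x + d) mod n + n - x) mod n = d mod n"
proof -
  define r where "r = d mod n"
  have r: "r < n" using assms r_def by simp
  have e: "(x + d) mod n = (x + r) mod n" by (simp add: r_def mod_add_right_eq)
  show ?thesis
  proof (cases "x + r < n")
    case True
    then show ?thesis using e r r_def by simp
  next
    case False
    then have "(x + r) mod n = x + r - n" using r assms by (simp add: le_mod_geq)
    then show ?thesis using e r r_def False assms by simp
  qed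
qed

lemma mod_add_mult_pred_eq_0D:
  assumes "(X + m * ((n - 1) * s)) mod (n::nat) = 0" "n > 0"
  shows "X mod n = (m * s) mod n"
proof -
  have "((X + m * ((n - 1) * s)) + m * s) mod n = (0 + m * s) mod n"
    using assms(1) by (metis mod_add_left_eq)
  moreover have "X + m * ((n - 1) * s) + m * s = X + n * (m * s)"
    using assms(2) by (cases n) (auto simp: algebra_simps)
  ultimately have "(X + n * (m * s)) mod n = (m * s) mod n" by (simp only: add_0)
  then show ?thesis by simp
qed

lemma Max_insert_0_image_mono:
  assumes "finite A" "finite B" "\<And>x. x \<in> A \<Longrightarrow> \<exists>y\<in>B. f x \<le> g y"
  shows "Max (insert 0 (f ` A)) \<le> Max (insert (0::real) (g ` B))"
proof (rule Max.boundedI)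
  show "finite (insert 0 (f ` A))" "insert 0 (f ` A) \<noteq> {}" using assms(1) by simp_all
  have fin: "finite (insert (0::real) (g ` B))" using assms(2) by simp
  fix z assume "z \<in> insert 0 (f ` A)"
  then show "z \<le> Max (insert 0 (g ` B))"
  proof
    assume "z = 0" then show ?thesis using fin by (simp add: Max_ge)
  next
    assume "z \<in> f ` A"
    then obtain x y where "z = f x" "y \<in> B" "f x \<le> g y" using assms(3) by blast
    moreover have "g y \<le> Max (insert 0 (g ` B))" using fin \<open>y \<in> B\<close> by (simp add: Max_ge)
    ultimately show ?thesis by simp
  qed
qed

lemma zero_sum_factor:
  fixes f :: "'a \<Rightarrow> nat"
  assumes "0 < n" "n \<le> length xs"
  shows "\<exists>u b v. xs = u @ b @ v \<and> b \<noteq> [] \<and> sum_list (map f b) mod n = 0"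
proof -
  define Q where "Q p = sum_list (map f (take p xs)) mod n" for p
  have "Q ` {..n} \<subseteq> {..<n}" using assms(1) by (auto simp: Q_def)
  then have "card (Q ` {..n}) < card {..n}"
    by (metis card_lessThan card_mono finite_lessThan card_atMost le_imp_less_Suc)
  then have "\<not> inj_on Q {..n}" by (rule pigeonhole)
  then obtain i j where ij: "i < j" "j \<le> n" "Q i = Q j"
    unfolding inj_on_def by (metis atMost_iff linorder_neqE_nat)
  define b where "b = take (j - i) (drop i xs)"
  have split: "xs = take i xs @ b @ drop j xs"
    using ij(1) by (metis append_take_drop_id b_def drop_drop le_add_diff_inverse2 less_imp_le)
  have "take j xs = take i xs @ b"
    using ij(1) by (metis b_def le_add_diff_inverse less_imp_le take_add)
  then have "(sum_list (map f (take i xs)) + sum_list (map f b)) mod n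
      = sum_list (map f (take i xs)) mod n"
    using ij(3) by (simp add: Q_def)
  then have "sum_list (map f b) mod n = 0"
    by (metis add_diff_cancel_left' le_add1 mod_eq_dvd_iff_nat dvd_imp_mod_0)
  moreover have "b \<noteq> []" using ij assms(2) by (simp add: b_def)
  ultimately show ?thesis
    using split by (intro exI[of _ "take i xs"] exI[of _ b] exI[of _ "drop j xs"]) simp
qed

definition word_weight :: "(nat \<Rightarrow> real) \<Rightarrow> nat list \<Rightarrow> real" where
  "word_weight c w = prod_list (map c w)"

definition circ_words :: "nat \<Rightarrow> nat \<Rightarrow> nat \<Rightarrow> nat \<Rightarrow> nat list set" where
  "circ_words n k i j = {w. length w = k \<and> set w \<subseteq> {..<n} \<and> (i + sum_list w) mod n = j}"

text \<open>The inserted 0 is the max-algebraic zero, the value of an entry with no words.\<close>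

definition circ_words_max :: "nat \<Rightarrow> (nat \<Rightarrow> real) \<Rightarrow> nat \<Rightarrow> nat \<Rightarrow> nat \<Rightarrow> real" where
  "circ_words_max n c k i j = Max (insert 0 (word_weight c ` circ_words n k i j))"

lemma word_weight_append [simp]: "word_weight c (u @ v) = word_weight c u * word_weight c v"
  by (simp add: word_weight_def)

lemma word_weight_replicate: "c s = 1 \<Longrightarrow> word_weight c (replicate m s) = 1"
  by (simp add: word_weight_def)

lemma word_weight_nonneg: "set w \<subseteq> {..<n} \<Longrightarrow> \<forall>t<n. 0 \<le> c t \<Longrightarrow> 0 \<le> word_weight c w"
  by (induction w) (auto simp: word_weight_def)

lemma word_weight_le_1:
  "set w \<subseteq> {..<n} \<Longrightarrow> \<forall>t<n. 0 \<le> c t \<and> c t \<le> 1 \<Longrightarrow> word_weight c w \<le> 1"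
  by (induction w) (auto simp: word_weight_def subset_iff intro!: mult_le_one prod_list_nonneg)

lemma word_weight_delete_factor:
  assumes "set (u @ b @ v) \<subseteq> {..<n}" "\<forall>t<n. 0 \<le> c t \<and> c t \<le> 1"
  shows "word_weight c (u @ b @ v) \<le> word_weight c (u @ v)"
proof -
  have "0 \<le> word_weight c u" "0 \<le> word_weight c b" "0 \<le> word_weight c v" "word_weight c b \<le> 1"
    using assms word_weight_nonneg[of _ n c] word_weight_le_1[of b n c] by auto
  then have "word_weight c u * (word_weight c b * word_weight c v)
      \<le> word_weight c u * word_weight c v"
    by (intro mult_left_mono mult_left_le_one_le) auto
  then show ?thesis by simp
qed

lemma finite_circ_words: "finite (circ_words n k i j)"
proof -
  have "circ_words n k i j \<subseteq> {w. set w \<subseteq> {..<n} \<and> length w = k}"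
    by (auto simp: circ_words_def)
  then show ?thesis using finite_lists_length_eq[of "{..<n}" k] finite_subset by blast
qed

lemma circ_words_max_nonneg: "0 \<le> circ_words_max n c k i j"
  unfolding circ_words_max_def using finite_circ_words by (simp add: Max_ge)

lemma word_weight_le_circ_words_max:
  "w \<in> circ_words n k i j \<Longrightarrow> word_weight c w \<le> circ_words_max n c k i j"
  unfolding circ_words_max_def using finite_circ_words by (simp add: Max_ge)

lemma circ_words_extend_le_circ_words_max:
  assumes n: "n > 0" and j: "j < n" and l: "l < n" and c: "\<forall>t<n. 0 \<le> c t"
  shows "circ_words_max n c k i l * c ((j + n - l) mod n) \<le> circ_words_max n c (Suc k) i j"
proof -
  define x where "x = (j + n - l) mod n"
  have x: "x < n" using n x_def by simp
  have "circ_words_max n c k i l \<in> insert 0 (word_weight c ` circ_words n k i l)"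
    unfolding circ_words_max_def by (rule Max_in) (simp_all add: finite_circ_words)
  then show ?thesis
  proof
    assume "circ_words_max n c k i l = 0"
    then show ?thesis using circ_words_max_nonneg by simp
  next
    assume "circ_words_max n c k i l \<in> word_weight c ` circ_words n k i l"
    then obtain w where w: "w \<in> circ_words n k i l" "circ_words_max n c k i l = word_weight c w"
      by auto
    have "(i + sum_list w + x) mod n = ((i + sum_list w) mod n + x) mod n"
      by (simp add: mod_add_left_eq)
    also have "\<dots> = (l + (j + n - l)) mod n"
      using w by (simp add: circ_words_def x_def mod_add_right_eq)
    also have "\<dots> = j" using l j by simp
    finally have "w @ [x] \<in> circ_words n (Suc k) i j"
      using w x by (auto simp: circ_words_def add.assoc)
    then have "word_weight c (w @ [x]) \<le> circ_words_max n c (Suc k) i j"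
      by (rule word_weight_le_circ_words_max)
    then show ?thesis using w by (simp add: x_def word_weight_def)
  qed
qed

lemma circ_words_max_Suc_le:
  assumes n: "n > 0" and j: "j < n" and c: "\<forall>t<n. 0 \<le> c t"
  shows "circ_words_max n c (Suc k) i j
    \<le> Max ((\<lambda>l. circ_words_max n c k i l * c ((j + n - l) mod n)) ` {..<n})"
    (is "_ \<le> Max (?f ` _)")
proof -
  have fin: "finite (?f ` {..<n})" by simp
  have "y \<le> Max (?f ` {..<n})" if "y \<in> insert 0 (word_weight c ` circ_words n (Suc k) i j)" for y
    using that
  proof
    assume "y = 0"
    moreover have "0 \<le> ?f 0" using circ_words_max_nonneg c n by simp
    moreover have "?f 0 \<le> Max (?f ` {..<n})"
      using fin n by (intro Max_ge) (auto intro!: image_eqI[where x=0])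
    ultimately show ?thesis by linarith
  next
    assume "y \<in> word_weight c ` circ_words n (Suc k) i j"
    then obtain w' where w': "w' \<in> circ_words n (Suc k) i j" "y = word_weight c w'" by blast
    then have "w' \<noteq> []" by (auto simp: circ_words_def)
    then obtain w x where "w' = w @ [x]" by (metis rev_exhaust)
    with w' have wx: "w @ [x] \<in> circ_words n (Suc k) i j" "y = word_weight c w * c x"
      by (simp_all add: word_weight_def)
    define l where "l = (i + sum_list w) mod n"
    have l: "l < n" using n l_def by simp
    have x: "x < n" using wx by (auto simp: circ_words_def)
    have "j = (l + x) mod n"
      using wx by (simp add: circ_words_def l_def mod_add_left_eq add.assoc)
    then have cx: "(j + n - l) mod n = x" using circ_offset_shift[OF l, of x] x by simp
    have "w \<in> circ_words n k i l" using wx by (auto simp: circ_words_def l_def)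
    then have "y \<le> circ_words_max n c k i l * c x"
      unfolding wx(2) using c x by (intro mult_right_mono word_weight_le_circ_words_max) auto
    also have "\<dots> \<le> Max (?f ` {..<n})" using fin l cx by (intro Max_ge) auto
    finally show ?thesis .
  qed
  then show ?thesis unfolding circ_words_max_def[of n c "Suc k"]
    by (intro Max.boundedI) (simp_all add: finite_circ_words)
qed

lemma mp_pow_circ_eq_circ_words_max:
  assumes n: "n > 0" and i: "i < n" and j: "j < n" and c: "\<forall>t<n. 0 \<le> c t"
  shows "mp_pow n (circ n c) k i j = circ_words_max n c k i j"
  using j
proof (induction k arbitrary: j)
  case 0
  then have "circ_words n 0 i j = (if i = j then {[]} else {})" using i by (auto simp: circ_words_def)
  then show ?case by (simp add: circ_words_max_def word_weight_def)
next
  case (Suc k)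
  have "mp_pow n (circ n c) (Suc k) i j
      = Max ((\<lambda>l. circ_words_max n c k i l * c ((j + n - l) mod n)) ` {..<n})"
    unfolding mp_pow.simps mp_mult_def
    by (intro arg_cong[where f=Max] image_cong) (simp_all add: Suc.IH circ_def)
  also have "\<dots> = circ_words_max n c (Suc k) i j"
  proof (rule antisym)
    show "Max ((\<lambda>l. circ_words_max n c k i l * c ((j + n - l) mod n)) ` {..<n})
        \<le> circ_words_max n c (Suc k) i j"
      using n circ_words_extend_le_circ_words_max[OF n Suc.prems _ c] by (intro Max.boundedI) auto
  qed (rule circ_words_max_Suc_le[OF n Suc.prems c])
  finally show ?case .
qed

lemma word_shortening:
  assumes n: "n > 0" and c: "\<forall>t<n. 0 \<le> c t \<and> c t \<le> 1"
  shows "set r \<subseteq> {..<n} \<Longrightarrow> \<exists>r'. set r' \<subseteq> {..<n} \<and> length r' \<le> n - 1 \<and> length r' \<le> length r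
     \<and> word_weight c r \<le> word_weight c r'
     \<and> (sum_list r' + (length r - length r') * s) mod n = sum_list r mod n"
proof (induction r rule: length_induct)
  case (1 r)
  show ?case
  proof (cases "length r \<le> n - 1")
    case True
    then show ?thesis using "1.prems" by (intro exI[of _ r]) auto
  next
    case False
    then have "n \<le> length r" by simp
    \<comment> \<open>adding \<open>(n - 1) * s\<close> to a letter subtracts \<open>s\<close> modulo \<open>n\<close>\<close>
    from zero_sum_factor[OF n this, where f = "\<lambda>x. x + (n - 1) * s"]
    obtain u b v where r: "r = u @ b @ v" and b: "b \<noteq> []"
      and "sum_list (map (\<lambda>x. x + (n - 1) * s) b) mod n = 0"
      by (elim exE conjE)
    then have "(sum_list b + length b * ((n - 1) * s)) mod n = 0"
      by (simp add: sum_list_addf sum_list_triv)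
    then have sb: "sum_list b mod n = (length b * s) mod n"
      by (rule mod_add_mult_pred_eq_0D[OF _ n])
    have "length (u @ v) < length r" "set (u @ v) \<subseteq> {..<n}" using r b "1.prems" by auto
    then obtain r' where r': "set r' \<subseteq> {..<n}" "length r' \<le> n - 1" "length r' \<le> length (u @ v)"
      "word_weight c (u @ v) \<le> word_weight c r'"
      "(sum_list r' + (length (u @ v) - length r') * s) mod n = sum_list (u @ v) mod n"
      using "1.IH" by blast
    have "length r - length r' = (length (u @ v) - length r') + length b"
      using r r'(3) by simp
    then have "(sum_list r' + (length r - length r') * s) mod n
        = ((sum_list r' + (length (u @ v) - length r') * s) + length b * s) mod n"
      by (simp add: algebra_simps)
    also have "\<dots> = (sum_list (u @ v) + sum_list b) mod n"
      using r'(5) sb by (metis mod_add_left_eq mod_add_right_eq)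
    also have "\<dots> = sum_list r mod n" by (simp add: r ac_simps)
    finally have "(sum_list r' + (length r - length r') * s) mod n = sum_list r mod n" .
    moreover have "word_weight c r \<le> word_weight c r'"
      using word_weight_delete_factor[of u b v n c] "1.prems" c r r'(4) by simp
    ultimately show ?thesis using r' r by (intro exI[of _ r']) auto
  qed
qed

lemma circ_words_max_periodic:
  assumes n: "n > 0" and c: "\<forall>t<n. 0 \<le> c t \<and> c t \<le> 1" and s: "s < n" "c s = 1"
    and k: "n - 1 \<le> k"
  shows "circ_words_max n c (k + n) i j = circ_words_max n c k i j"
proof (rule antisym)
  show "circ_words_max n c (k + n) i j \<le> circ_words_max n c k i j"
    unfolding circ_words_max_def
  proof (rule Max_insert_0_image_mono[OF finite_circ_words finite_circ_words])
    fix w assume w: "w \<in> circ_words n (k + n) i j"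
    then have "set w \<subseteq> {..<n}" by (simp add: circ_words_def)
    then obtain r' where r': "set r' \<subseteq> {..<n}" "length r' \<le> n - 1"
      "word_weight c w \<le> word_weight c r'"
      "(sum_list r' + (length w - length r') * s) mod n = sum_list w mod n"
      using word_shortening[OF n c, of w s] by blast
    define w' where "w' = r' @ replicate (k - length r') s"
    have "length w - length r' = (k - length r') + n"
      using w r'(2) k by (simp add: circ_words_def)
    then have "(sum_list r' + (length w - length r') * s) mod n
        = (sum_list r' + (k - length r') * s + n * s) mod n"
      by (simp add: add_mult_distrib add.assoc)
    also have "\<dots> = sum_list w' mod n" by (simp add: w'_def sum_list_replicate)
    finally have "sum_list w' mod n = (sum_list r' + (length w - length r') * s) mod n" ..
    then have "(i + sum_list w') mod n = (i + sum_list w) mod n"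
      using r'(4) by (metis mod_add_right_eq)
    then have "w' \<in> circ_words n k i j" using w r' k s by (auto simp: circ_words_def w'_def)
    moreover have "word_weight c w \<le> word_weight c w'"
      using r' s by (simp add: w'_def word_weight_replicate)
    ultimately show "\<exists>y\<in>circ_words n k i j. word_weight c w \<le> word_weight c y" by blast
  qed
next
  show "circ_words_max n c k i j \<le> circ_words_max n c (k + n) i j"
    unfolding circ_words_max_def
  proof (rule Max_insert_0_image_mono[OF finite_circ_words finite_circ_words])
    fix w assume w: "w \<in> circ_words n k i j"
    define w' where "w' = w @ replicate n s"
    have "(i + sum_list w') mod n = (i + sum_list w) mod n"
      by (simp add: w'_def sum_list_replicate add.assoc[symmetric])
    then have "w' \<in> circ_words n (k + n) i j" using w s by (auto simp: circ_words_def w'_def)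
    moreover have "word_weight c w \<le> word_weight c w'" using s by (simp add: w'_def word_weight_replicate)
    ultimately show "\<exists>y\<in>circ_words n (k + n) i j. word_weight c w \<le> word_weight c y" by blast
  qed
qed

lemma cycle_gmean_le:
  assumes "xs \<noteq> []" "set xs \<subseteq> {..<n}" "\<forall>i<n. \<forall>j<n. 0 \<le> A i j \<and> A i j \<le> M"
  shows "cycle_gmean A xs \<le> M"
proof -
  have "0 \<le> M" using assms by (metis hd_in_set lessThan_iff order_trans subsetD)
  have "(\<Prod>i<length xs. A (xs ! i) (xs ! ((i + 1) mod length xs))) \<le> (\<Prod>i<length xs. M)"
    using assms by (intro prod_mono) (auto simp: subset_iff)
  then have "cycle_gmean A xs \<le> root (length xs) (M ^ length xs)"
    unfolding cycle_gmean_def using assms(1) by simp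
  also have "\<dots> = M" using assms(1) \<open>0 \<le> M\<close> by (simp add: real_root_power_cancel)
  finally show ?thesis .
qed

lemma cycle_gmean_const:
  assumes "xs \<noteq> []" "0 \<le> M" "\<forall>i<length xs. A (xs ! i) (xs ! ((i + 1) mod length xs)) = M"
  shows "cycle_gmean A xs = M"
  using assms by (simp add: cycle_gmean_def real_root_power_cancel)

lemma translation_orbit_cycle:
  fixes n s :: nat
  assumes "0 < n"
  shows "\<exists>xs. xs \<noteq> [] \<and> distinct xs \<and> set xs \<subseteq> {..<n}
    \<and> (\<forall>i<length xs. xs ! ((i + 1) mod length xs) = (xs ! i + s) mod n)"
proof -
  define P where "P p \<longleftrightarrow> 0 < p \<and> (p * s) mod n = 0" for p
  define p where "p = (LEAST p. P p)"
  have "P n" using assms by (simp add: P_def)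
  then have "P p" unfolding p_def by (rule LeastI)
  then have p: "0 < p" "(p * s) mod n = 0" by (simp_all add: P_def)
  have p_min: "\<not> P q" if "q < p" for q using not_less_Least[of q P] that by (simp add: p_def)
  define xs where "xs = map (\<lambda>i. (i * s) mod n) [0..<p]"
  have "inj_on (\<lambda>i. (i * s) mod n) {0..<p}"
  proof (rule linorder_inj_onI')
    fix i j assume ij: "i \<in> {0..<p}" "j \<in> {0..<p}" "i < j"
    show "(i * s) mod n \<noteq> (j * s) mod n"
    proof
      assume "(i * s) mod n = (j * s) mod n"
      then have "n dvd (j * s - i * s)" using ij mod_eq_dvd_iff_nat[of "i * s" "j * s" n] by simp
      then have "P (j - i)" using ij by (simp add: P_def diff_mult_distrib)
      moreover have "j - i < p" using ij by auto
      ultimately show False using p_min by blast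
    qed
  qed
  then have "distinct xs" by (simp add: xs_def distinct_map)
  moreover have "xs ! ((i + 1) mod length xs) = (xs ! i + s) mod n" if i: "i < length xs" for i
  proof (cases "i + 1 < p")
    case True
    then show ?thesis using i by (simp add: xs_def mod_add_right_eq add.commute)
  next
    case False
    then have "p = Suc i" using i by (simp add: xs_def)
    then have "xs ! ((i + 1) mod length xs) = 0" using p by (simp add: xs_def del: upt_Suc)
    moreover have "xs ! i = (i * s) mod n" using \<open>p = Suc i\<close> by (simp add: xs_def del: upt_Suc)
    then have "(xs ! i + s) mod n = (p * s) mod n"
      using \<open>p = Suc i\<close> by (simp add: mod_add_right_eq add.commute)
    ultimately show ?thesis using p by simp
  qed
  moreover have "xs \<noteq> []" "set xs \<subseteq> {..<n}" using p assms by (auto simp: xs_def)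
  ultimately show ?thesis by blast
qed

lemma mp_lambda_circ:
  assumes n: "n > 0" and a: "\<forall>t<n. 0 \<le> a t \<and> a t \<le> M" and s: "s < n" "a s = M"
  shows "mp_lambda n (circ n a) = M"
proof -
  define C where "C = {xs. xs \<noteq> [] \<and> distinct xs \<and> set xs \<subseteq> {..<n}}"
  have "finite C" unfolding C_def
    by (rule finite_subset[OF _ finite_subset_distinct[of "{..<n}"]]) auto
  have bounds: "\<forall>i<n. \<forall>j<n. 0 \<le> circ n a i j \<and> circ n a i j \<le> M"
    using a n by (simp add: circ_def)
  obtain xs where xs: "xs \<in> C"
    and step: "\<forall>i<length xs. xs ! ((i + 1) mod length xs) = (xs ! i + s) mod n"
    using translation_orbit_cycle[OF n, of s] by (auto simp: C_def)
  have "circ n a (xs ! i) (xs ! ((i + 1) mod length xs)) = M" if "i < length xs" for i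
  proof -
    have "xs ! i < n" using xs that nth_mem by (fastforce simp: C_def)
    then show ?thesis using step that s circ_offset_shift[of "xs ! i" n s] by (simp add: circ_def)
  qed
  then have "cycle_gmean (circ n a) xs = M"
    using xs a s by (intro cycle_gmean_const) (auto simp: C_def)
  moreover have "cycle_gmean (circ n a) ys \<le> M" if "ys \<in> C" for ys
    using that bounds by (intro cycle_gmean_le) (auto simp: C_def)
  ultimately show ?thesis unfolding mp_lambda_def C_def[symmetric]
    using \<open>finite C\<close> xs by (intro antisym Max.boundedI Max_ge_iff[THEN iffD2]) auto
qed

lemma mat_scale_circ: "mat_scale r (circ n a) = circ n (\<lambda>t. r * a t)"
  by (simp add: fun_eq_iff mat_scale_def circ_def)

lemma periodic_from_circ:
  assumes nonneg: "\<forall>t<n. a t \<ge> 0" and nonzero: "\<exists>t<n. a t \<noteq> 0"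
  shows "periodic_from n (circ n a) (max 1 (n - 1))"
proof -
  obtain t0 where t0: "t0 < n" "a t0 \<noteq> 0" using nonzero by blast
  then have n: "n > 0" by simp
  have "Max (a ` {..<n}) \<in> a ` {..<n}" using n by (intro Max_in) auto
  then obtain s where s: "s < n" "a s = Max (a ` {..<n})" by auto
  have a_le: "\<forall>t<n. 0 \<le> a t \<and> a t \<le> a s" using nonneg s by simp
  then have "0 \<le> a t0" "a t0 \<le> a s" using t0 by auto
  then have "0 < a s" using t0(2) by linarith
  define c where "c = (\<lambda>t. a t / a s)"
  have c: "\<forall>t<n. 0 \<le> c t \<and> c t \<le> 1" "c s = 1" using a_le \<open>0 < a s\<close> by (simp_all add: c_def)
  have "mp_lambda n (circ n a) = a s" using mp_lambda_circ[OF n a_le s(1)] by simp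
  then have normpow: "normpow n (circ n a) t = mp_pow n (circ n c) t" for t
    by (simp add: normpow_def mat_scale_circ c_def)
  show ?thesis unfolding periodic_from_def
  proof (intro conjI exI[of _ n] allI impI)
    fix t i j assume t: "max 1 (n - 1) \<le> t" and ij: "i < n" "j < n"
    have "mp_pow n (circ n c) (t + n) i j = circ_words_max n c (t + n) i j"
      using mp_pow_circ_eq_circ_words_max[OF n ij] c(1) by simp
    also have "\<dots> = circ_words_max n c t i j"
      using circ_words_max_periodic[OF n c(1) s(1) c(2)] t by simp
    also have "\<dots> = mp_pow n (circ n c) t i j"
      using mp_pow_circ_eq_circ_words_max[OF n ij] c(1) by simp
    finally show "normpow n (circ n a) (t + n) i j = normpow n (circ n a) t i j"
      by (simp only: normpow)
  qed (use n in simp_all)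
qed

theorem proposition3:
  fixes n :: nat and a :: "nat \<Rightarrow> real"
  assumes nonneg: "\<forall>t<n. a t \<ge> 0"
    and nonzero: "\<exists>t<n. a t \<noteq> 0"
  shows "ult_periodic n (circ n a) \<and> transient n (circ n a) \<le> (n - 1)^2 + 1"
proof -
  have per: "periodic_from n (circ n a) (max 1 (n - 1))"
    using periodic_from_circ[OF nonneg nonzero] .
  then have "transient n (circ n a) \<le> max 1 (n - 1)"
    unfolding transient_def by (rule Least_le)
  also have "\<dots> \<le> (n - 1)^2 + 1"
    using le_square[of "n - 1"] by (simp add: power2_eq_square le_SucI)
  finally show ?thesis using per by (auto simp: ult_periodic_def)
qed

end
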